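(* Assume that the continuum $\mathfrak{c}$ is a regular cardinal. Let $X$ be a Polish space, let $\{Y_\alpha:\alpha<\mathfrak{c}\}$ be Polish spaces, and let $\{f_\alpha:\alpha<\mathfrak{c}\}$ be functions $f_\alpha: X\to Y_\alpha$ such that for every $\alpha<\mathfrak{c}$: (1) $f_\alpha[X]=Y_\alpha$; (2) for every $y\in Y_\alpha$, $|f_\alpha^{-1}[\{y\}]|<\mathfrak{c}$. Then there exists $A\subseteq X$ such that for every $\alpha<\mathfrak{c}$ the image $f_\alpha[A]$ is a Bernstein set in $Y_\alpha$.
   Context: A subset $S$ of a Polish space $Y$ is a Bernstein set in $Y$ if for every nonempty perfect set $P\subseteq Y$ we have $S\cap P\neq\emptyset$ and $(Y\setminus S)\cap P\neq\emptyset$. The functions $f_\alpha$ are arbitrary (no continuity is assumed). *)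

theory Defs
  imports "HOL-Analysis.Analysis"
begin

definition Polish_space :: "'a topology \<Rightarrow> bool" where
  "Polish_space X \<longleftrightarrow> completely_metrizable_space X \<and> separable_space X"

definition perfect_set :: "'a topology \<Rightarrow> 'a set \<Rightarrow> bool" where
  "perfect_set Y P \<longleftrightarrow> closedin Y P \<and> Y derived_set_of P = P"

definition Bernstein_set :: "'a topology \<Rightarrow> 'a set \<Rightarrow> bool" where
  "Bernstein_set Y S \<longleftrightarrow> S \<subseteq> topspace Y \<and>
     (\<forall>P. perfect_set Y P \<and> P \<noteq> {} \<longrightarrow> S \<inter> P \<noteq> {} \<and> (topspace Y - S) \<inter> P \<noteq> {})"

end

theory Submission
  imports Defs "HOL-Library.Equipollence"
begin

text \<open>
  A Polish space is second countable, so it has at most \<open>\<c>\<close> closed sets; hence there are at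
  most \<open>\<c>\<close> tasks \<open>(f\<^sub>\<alpha>, P)\<close> with \<open>P\<close> a nonempty perfect subset of \<open>Y\<^sub>\<alpha>\<close>, and each such
  \<open>P\<close> has size \<open>\<c>\<close>. Enumerate the tasks in order type \<open>\<c>\<close> and choose, by transfinite
  recursion, a point \<open>x\<^sub>\<xi>\<close> with \<open>f\<^sub>\<alpha>(x\<^sub>\<xi>) \<in> P\<close> and a witness \<open>y\<^sub>\<xi> \<in> P\<close>, such that
  \<open>x\<^sub>\<xi>\<close> avoids the fibres over the earlier witnesses \<open>y\<^sub>\<eta>\<close> and \<open>y\<^sub>\<xi>\<close> avoids the images of
  \<open>x\<^sub>\<xi>\<close> and of the earlier \<open>x\<^sub>\<eta>\<close>. Both choices are possible because fewer than \<open>\<c>\<close> sets,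
  each of size less than \<open>\<c>\<close>, have union of size less than \<open>\<c>\<close> (regularity). For
  \<open>A = {x\<^sub>\<xi>}\<close>, the image \<open>f\<^sub>\<alpha>[A]\<close> meets \<open>P\<close> in \<open>f\<^sub>\<alpha>(x\<^sub>\<xi>)\<close> and misses \<open>y\<^sub>\<xi>\<close>.
\<close>

unbundle cardinal_syntax

lemma lepoll_imp_card_of_ordLeq: "A \<lesssim> B \<Longrightarrow> |A| \<le>o |B|"
  unfolding lepoll_def using card_of_ordLeq by blast

lemma (in Metric_space) second_countable_if_separable:
  assumes "separable_space mtopology"
  shows "second_countable mtopology"
proof -
  obtain C where C: "countable C" "C \<subseteq> M" "mtopology closure_of C = M"
    using assms unfolding separable_space_def by auto
  define \<B> where "\<B> = (\<lambda>(c, n). mball c (1 / Suc n)) ` (C \<times> UNIV)"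
  have "\<exists>V\<in>\<B>. x \<in> V \<and> V \<subseteq> U" if U: "openin mtopology U" "x \<in> U" for U x
  proof -
    obtain r where r: "r > 0" "mball x r \<subseteq> U" and x: "x \<in> M"
      using U openin_mtopology by blast
    obtain n where n: "1 / Suc n < r / 2"
      using nat_approx_posE[of "r / 2"] r(1) by auto
    have "x \<in> mtopology closure_of C" using C x by auto
    moreover have "(0::real) < 1 / Suc n" by simp
    ultimately obtain c where c: "c \<in> C" "c \<in> mball x (1 / Suc n)"
      unfolding metric_closure_of by blast
    then have dist: "d c x < 1 / Suc n" by (simp add: commute)
    then have "mball c (1 / Suc n) \<subseteq> mball x r"
      using n by (intro mball_subset x) linarith
    moreover have "x \<in> mball c (1 / Suc n)" using c C x dist by auto
    moreover have "mball c (1 / Suc n) \<in> \<B>" unfolding \<B>_def using c by auto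
    ultimately show ?thesis using r by blast
  qed
  moreover have "countable \<B>" "\<forall>V\<in>\<B>. openin mtopology V"
    unfolding \<B>_def using C(1) by auto
  ultimately show ?thesis unfolding second_countable_def by blast
qed

lemma Polish_space_imp_second_countable: "Polish_space X \<Longrightarrow> second_countable X"
  unfolding Polish_space_def completely_metrizable_space_def
  using Metric_space.second_countable_if_separable by blast

text \<open>A closed set is determined by the basic open sets contained in its complement.\<close>

lemma second_countable_closedin_lepoll_reals:
  assumes "second_countable X"
  shows "{C. closedin X C} \<lesssim> (UNIV :: real set)"
proof -
  obtain \<B> where \<B>: "countable \<B>" "\<forall>V \<in> \<B>. openin X V"
    "\<forall>U x. openin X U \<and> x \<in> U \<longrightarrow> (\<exists>V \<in> \<B>. x \<in> V \<and> V \<subseteq> U)"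
    using assms unfolding second_countable_def by auto
  obtain code :: "_ \<Rightarrow> nat" where code: "inj_on code \<B>"
    using \<B>(1) unfolding countable_def by auto
  define basic_cover where "basic_cover C = {V \<in> \<B>. V \<subseteq> topspace X - C}" for C
  have complement: "topspace X - C = \<Union>(basic_cover C)" if "closedin X C" for C
    using \<B>(3) openin_diff[OF openin_topspace that] unfolding basic_cover_def by blast
  have "inj_on (\<lambda>C. code ` basic_cover C) {C. closedin X C}"
  proof (rule inj_onI)
    fix C D assume C: "C \<in> {C. closedin X C}" and D: "D \<in> {C. closedin X C}"
      and "code ` basic_cover C = code ` basic_cover D"
    then have "basic_cover C = basic_cover D"
      using inj_on_image_eq_iff[OF code] unfolding basic_cover_def
      by (metis (no_types, lifting) mem_Collect_eq subsetI)
    then have "topspace X - C = topspace X - D" using complement C D by simp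
    then show "C = D" using C D closedin_subset by (metis Diff_Diff_Int inf.absorb2 mem_Collect_eq)
  qed
  then have "{C. closedin X C} \<lesssim> (UNIV :: nat set set)" unfolding lepoll_def by blast
  also have "\<dots> \<lesssim> (UNIV :: real set)" using eqpoll_imp_lepoll nat_sets_eqpoll_reals by blast
  finally show ?thesis .
qed

lemma card_of_closedin_Polish_space:
  "Polish_space X \<Longrightarrow> |{C. closedin X C}| \<le>o |UNIV :: real set|"
  by (intro lepoll_imp_card_of_ordLeq second_countable_closedin_lepoll_reals
      Polish_space_imp_second_countable)

lemma card_of_Sigma_perfect_set_Polish_spaces:
  assumes "|I| \<le>o |UNIV :: real set|" "\<forall>i \<in> I. Polish_space (Y i)"
  shows "|SIGMA i : I. {P. perfect_set (Y i) P}| \<le>o |UNIV :: real set|"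
proof -
  have "|SIGMA i : I. {P. perfect_set (Y i) P}| \<le>o |SIGMA i : I. {C. closedin (Y i) C}|"
    by (rule card_of_mono1) (auto simp: perfect_set_def)
  moreover have "|SIGMA i : I. {C. closedin (Y i) C}| \<le>o |UNIV :: real set|"
    using assms card_of_closedin_Polish_space
    by (intro card_of_Sigma_ordLeq_infinite[OF infinite_UNIV_char_0]) auto
  ultimately show ?thesis by (rule ordLeq_transitive)
qed

lemma card_of_perfect_set_Polish_space:
  assumes "Polish_space Y" "perfect_set Y P" "P \<noteq> {}"
  shows "|UNIV :: real set| \<le>o |P|"
  using assms unfolding Polish_space_def perfect_set_def
  by (intro lepoll_imp_card_of_ordLeq lepoll_perfect_set) auto

lemma Bernstein_setI:
  assumes "S \<subseteq> topspace Y"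
    and "\<And>P. perfect_set Y P \<Longrightarrow> P \<noteq> {} \<Longrightarrow> S \<inter> P \<noteq> {} \<and> P - S \<noteq> {}"
  shows "Bernstein_set Y S"
  unfolding Bernstein_set_def
proof (intro conjI allI impI)
  show "S \<subseteq> topspace Y" by (rule assms(1))
  fix P assume P: "perfect_set Y P \<and> P \<noteq> {}"
  then have "P \<subseteq> topspace Y" unfolding perfect_set_def using closedin_subset by blast
  then show "S \<inter> P \<noteq> {}" "(topspace Y - S) \<inter> P \<noteq> {}" using assms(2) P by blast+
qed

lemma wf_recursive_choice:
  assumes "wf R"
    and exists: "\<And>h a. \<exists>p. Q h a p"
    and locality: "\<And>h h' a p. Q h a p \<Longrightarrow> (\<And>b. (b, a) \<in> R \<Longrightarrow> h b = h' b) \<Longrightarrow> Q h' a p"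
  obtains s where "\<And>a. Q s a (s a)"
proof -
  define s where "s = wfrec R (\<lambda>h a. SOME p. Q h a p)"
  have "Q s a (s a)" for a
  proof -
    have "Q (cut s R a) a (SOME p. Q (cut s R a) a p)" by (rule someI_ex[OF exists])
    then have "Q (cut s R a) a (s a)" unfolding s_def by (subst wfrec[OF \<open>wf R\<close>])
    then show ?thesis by (rule locality) (simp add: cut_apply)
  qed
  then show thesis by (rule that)
qed

lemma finite_card_of_ordLess_infinite: "finite A \<Longrightarrow> infinite B \<Longrightarrow> |A| <o |B|"
  using finite_ordLess_infinite[OF card_of_Well_order card_of_Well_order] by (simp add: Field_card_of)

lemma meet_and_miss_step:
  assumes "infinite P" "P \<subseteq> F ` S" "|B| <o |P|" "|C| <o |P|"
  obtains x y where "x \<in> S - B" "F x \<in> P" "y \<in> P" "y \<notin> F ` insert x C"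
proof -
  let ?S' = "{x \<in> S. F x \<in> P}"
  have "P \<subseteq> F ` ?S'" using assms(2) by auto
  then have "|P| \<le>o |?S'|" using card_of_mono1 card_of_image ordLeq_transitive by blast
  then have "\<not> ?S' \<subseteq> B"
    using assms(3) card_of_mono1 not_ordLess_ordLeq ordLeq_transitive by blast
  then obtain x where x: "x \<in> S - B" "F x \<in> P" by blast
  have "|{x}| <o |P|" using finite_card_of_ordLess_infinite assms(1) by blast
  then have "|insert x C| <o |P|"
    using card_of_Un_ordLess_infinite[OF assms(1) _ assms(4)] by (metis insert_is_Un)
  then have "|F ` insert x C| <o |P|" using card_of_image ordLeq_ordLess_trans by blast
  then have "\<not> P \<subseteq> F ` insert x C" using card_of_mono1 not_ordLess_ordLeq by blast
  then obtain y where "y \<in> P" "y \<notin> F ` insert x C" by blast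
  with x show thesis by (rule that)
qed

lemma regularCard_meet_and_miss_sequence:
  fixes F :: "'k \<Rightarrow> 'a \<Rightarrow> 'b" and P :: "'k \<Rightarrow> 'b set"
  assumes regular: "regularCard |UNIV :: 'k set|" and infinite: "infinite (UNIV :: 'k set)"
    and small_fibres: "\<And>\<xi> y. y \<in> P \<xi> \<Longrightarrow> |{x \<in> S. F \<xi> x = y}| <o |UNIV :: 'k set|"
    and large: "\<And>\<xi>. |UNIV :: 'k set| \<le>o |P \<xi>|"
    and covered: "\<And>\<xi>. P \<xi> \<subseteq> F \<xi> ` S"
  obtains x y where "\<And>\<xi>. x \<xi> \<in> S" "\<And>\<xi>. F \<xi> (x \<xi>) \<in> P \<xi>" "\<And>\<xi>. y \<xi> \<in> P \<xi>"
    and "\<And>\<xi> \<eta>. (\<eta>, \<xi>) \<in> |UNIV :: 'k set| \<Longrightarrow> F \<xi> (x \<eta>) \<noteq> y \<xi>"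
    and "\<And>\<xi> \<eta>. \<eta> \<in> underS |UNIV :: 'k set| \<xi> \<Longrightarrow> F \<eta> (x \<xi>) \<noteq> y \<eta>"
proof -
  let ?\<kappa> = "|UNIV :: 'k set|"
  define R where "R = ?\<kappa> - Id"
  have "wf R" using card_of_Well_order[of "UNIV :: 'k set"] unfolding R_def well_order_on_def by blast
  have before: "underS ?\<kappa> \<xi> = {\<eta>. (\<eta>, \<xi>) \<in> R}" for \<xi>
    unfolding underS_def R_def by auto
  have few_before: "|underS ?\<kappa> \<xi>| <o ?\<kappa>" for \<xi>
    by (rule card_of_underS[OF card_of_Card_order]) (simp add: Field_card_of)
  have "stable ?\<kappa>"
    using regularCard_stable[OF card_of_Card_order _ regular] infinite by (simp add: Field_card_of)
  define forbidden where "forbidden h \<xi> =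
      (\<Union>\<eta> \<in> underS ?\<kappa> \<xi>. {x \<in> S. F \<eta> x = snd (h \<eta>) \<and> snd (h \<eta>) \<in> P \<eta>})"
    for h :: "'k \<Rightarrow> 'a \<times> 'b" and \<xi>
  define good where "good h \<xi> p \<longleftrightarrow>
      fst p \<in> S - forbidden h \<xi> \<and> F \<xi> (fst p) \<in> P \<xi> \<and>
      snd p \<in> P \<xi> \<and> snd p \<notin> F \<xi> ` insert (fst p) (fst ` h ` underS ?\<kappa> \<xi>)"
    for h :: "'k \<Rightarrow> 'a \<times> 'b" and \<xi> p
  have "\<exists>p. good h \<xi> p" for h \<xi>
  proof -
    have "|{x \<in> S. F \<eta> x = y \<and> y \<in> P \<eta>}| <o ?\<kappa>" for \<eta> y
      using small_fibres[of y \<eta>] infinite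
      by (cases "y \<in> P \<eta>") (simp_all add: finite_card_of_ordLess_infinite)
    then have "|forbidden h \<xi>| <o ?\<kappa>"
      unfolding forbidden_def by (rule stable_UNION[OF \<open>stable ?\<kappa>\<close> few_before])
    moreover have "|fst ` h ` underS ?\<kappa> \<xi>| <o ?\<kappa>"
      by (rule ordLeq_ordLess_trans[OF card_of_image ordLeq_ordLess_trans[OF card_of_image few_before]])
    moreover have "infinite (P \<xi>)"
      using card_of_ordLeq_infinite[OF large] infinite by blast
    ultimately obtain x y where "x \<in> S - forbidden h \<xi>" "F \<xi> x \<in> P \<xi>" "y \<in> P \<xi>"
      "y \<notin> F \<xi> ` insert x (fst ` h ` underS ?\<kappa> \<xi>)"
      using meet_and_miss_step[OF _ covered ordLess_ordLeq_trans[OF _ large]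
          ordLess_ordLeq_trans[OF _ large]] by blast
    then show ?thesis unfolding good_def by auto
  qed
  moreover have "good h' \<xi> p" if "good h \<xi> p" "\<And>\<eta>. (\<eta>, \<xi>) \<in> R \<Longrightarrow> h \<eta> = h' \<eta>" for h h' \<xi> p
  proof -
    have "h \<eta> = h' \<eta>" if "\<eta> \<in> underS ?\<kappa> \<xi>" for \<eta>
      using that \<open>\<And>\<eta>. (\<eta>, \<xi>) \<in> R \<Longrightarrow> h \<eta> = h' \<eta>\<close> before by blast
    then show ?thesis
      using \<open>good h \<xi> p\<close> unfolding good_def forbidden_def by (simp cong: SUP_cong image_cong)
  qed
  ultimately obtain s where s: "\<And>\<xi>. good s \<xi> (s \<xi>)"
    using wf_recursive_choice[OF \<open>wf R\<close>] by metis
  show thesis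
  proof (rule that[of "fst \<circ> s" "snd \<circ> s"])
    show "(fst \<circ> s) \<xi> \<in> S" "F \<xi> ((fst \<circ> s) \<xi>) \<in> P \<xi>" "(snd \<circ> s) \<xi> \<in> P \<xi>" for \<xi>
      using s[of \<xi>] unfolding good_def by auto
    show "F \<xi> ((fst \<circ> s) \<eta>) \<noteq> (snd \<circ> s) \<xi>" if "(\<eta>, \<xi>) \<in> ?\<kappa>" for \<xi> \<eta>
    proof -
      have "\<eta> = \<xi> \<or> \<eta> \<in> underS ?\<kappa> \<xi>" using that unfolding underS_def by auto
      then show ?thesis using s[of \<xi>] unfolding good_def by (auto simp: image_iff)
    qed
    show "F \<eta> ((fst \<circ> s) \<xi>) \<noteq> (snd \<circ> s) \<eta>" if "\<eta> \<in> underS ?\<kappa> \<xi>" for \<xi> \<eta>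
      using that s[of \<xi>] s[of \<eta>] unfolding good_def forbidden_def by auto
  qed
qed

lemma regularCard_meet_and_miss:
  fixes T :: "(('a \<Rightarrow> 'b) \<times> 'b set) set"
  assumes regular: "regularCard |UNIV :: 'k set|" and infinite: "infinite (UNIV :: 'k set)"
    and few_tasks: "|T| \<le>o |UNIV :: 'k set|"
    and small_fibres: "\<And>F P y. (F, P) \<in> T \<Longrightarrow> y \<in> P \<Longrightarrow> |{x \<in> S. F x = y}| <o |UNIV :: 'k set|"
    and large: "\<And>F P. (F, P) \<in> T \<Longrightarrow> |UNIV :: 'k set| \<le>o |P|"
    and covered: "\<And>F P. (F, P) \<in> T \<Longrightarrow> P \<subseteq> F ` S"
  shows "\<exists>A \<subseteq> S. \<forall>(F, P) \<in> T. F ` A \<inter> P \<noteq> {} \<and> P - F ` A \<noteq> {}"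
proof (cases "T = {}")
  case True
  then show ?thesis by blast
next
  case False
  let ?\<kappa> = "|UNIV :: 'k set|"
  obtain task :: "'k \<Rightarrow> ('a \<Rightarrow> 'b) \<times> 'b set" where task: "range task = T"
    using card_of_ordLeq2[OF False, THEN iffD2, OF few_tasks] by blast
  have task_in: "(fst (task \<xi>), snd (task \<xi>)) \<in> T" for \<xi>
    using task by auto
  show ?thesis
  proof (rule regularCard_meet_and_miss_sequence[OF regular infinite,
        where F = "\<lambda>\<xi>. fst (task \<xi>)" and P = "\<lambda>\<xi>. snd (task \<xi>)",
        OF small_fibres[OF task_in] large[OF task_in] covered[OF task_in]])
    fix x y
    assume x: "\<And>\<xi>. x \<xi> \<in> S" "\<And>\<xi>. fst (task \<xi>) (x \<xi>) \<in> snd (task \<xi>)"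
      and y: "\<And>\<xi>. y \<xi> \<in> snd (task \<xi>)"
      and earlier: "\<And>\<xi> \<eta>. (\<eta>, \<xi>) \<in> ?\<kappa> \<Longrightarrow> fst (task \<xi>) (x \<eta>) \<noteq> y \<xi>"
      and later: "\<And>\<xi> \<eta>. \<eta> \<in> underS ?\<kappa> \<xi> \<Longrightarrow> fst (task \<eta>) (x \<xi>) \<noteq> y \<eta>"
    have "\<forall>(G, Q) \<in> T. G ` range x \<inter> Q \<noteq> {} \<and> Q - G ` range x \<noteq> {}"
    proof (intro ballI, unfold split_paired_all case_prod_conv)
      fix G Q assume "(G, Q) \<in> T"
      obtain \<xi> where \<xi>: "task \<xi> = (G, Q)" by (metis \<open>(G, Q) \<in> T\<close> task rangeE)
      have "(\<eta>, \<xi>) \<in> ?\<kappa> \<or> \<xi> \<in> underS ?\<kappa> \<eta>" for \<eta>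
        using wo_rel.TOTALS[of ?\<kappa>] card_of_Well_order unfolding wo_rel_def underS_def
        by (auto simp: Field_card_of)
      then have "G (x \<eta>) \<noteq> y \<xi>" for \<eta>
        using earlier later \<xi> by (metis fst_conv)
      then have "y \<xi> \<notin> G ` range x" by (metis imageE rangeE)
      moreover have "y \<xi> \<in> Q" using y[of \<xi>] \<xi> by simp
      moreover have "G (x \<xi>) \<in> G ` range x \<inter> Q" using x(2)[of \<xi>] \<xi> by simp
      ultimately show "G ` range x \<inter> Q \<noteq> {} \<and> Q - G ` range x \<noteq> {}" by blast
    qed
    moreover have "range x \<subseteq> S" using x(1) by blast
    ultimately show ?thesis by blast
  qed
qed

theorem mainTheorem1:
  fixes X :: "'a topology" and I :: "'i set"
    and Y :: "'i \<Rightarrow> 'b topology" and f :: "'i \<Rightarrow> 'a \<Rightarrow> 'b"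
  assumes cont_regular: "regularCard (card_of (UNIV :: real set))"
    and I_card: "(card_of I, card_of (UNIV :: real set)) \<in> ordIso"
    and X_polish: "Polish_space X"
    and Y_polish: "\<forall>i\<in>I. Polish_space (Y i)"
    and onto: "\<forall>i\<in>I. f i ` topspace X = topspace (Y i)"
    and small_fibres: "\<forall>i\<in>I. \<forall>y\<in>topspace (Y i).
                        (card_of {x \<in> topspace X. f i x = y}, card_of (UNIV :: real set)) \<in> ordLess"
  shows "\<exists>A \<subseteq> topspace X. \<forall>i\<in>I. Bernstein_set (Y i) (f i ` A)"
proof -
  define T where "T = (\<lambda>(i, P). (f i, P)) ` (SIGMA i : I. {P. perfect_set (Y i) P \<and> P \<noteq> {}})"
  have T_Sigma: "|T| \<le>o |SIGMA i : I. {P. perfect_set (Y i) P}|"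
    unfolding T_def by (rule ordLeq_transitive[OF card_of_image card_of_mono1]) auto
  have "|T| \<le>o |UNIV :: real set|"
    using ordLeq_transitive[OF T_Sigma
        card_of_Sigma_perfect_set_Polish_spaces[OF ordIso_imp_ordLeq[OF I_card] Y_polish]] .
  moreover have "|{x \<in> topspace X. F x = y}| <o |UNIV :: real set|" if "(F, P) \<in> T" "y \<in> P" for F P y
    using that small_fibres unfolding T_def perfect_set_def closedin_def by auto
  moreover have "|UNIV :: real set| \<le>o |P|" if "(F, P) \<in> T" for F P
    using that Y_polish unfolding T_def by (auto intro: card_of_perfect_set_Polish_space)
  moreover have "P \<subseteq> F ` topspace X" if "(F, P) \<in> T" for F P
    using that onto unfolding T_def perfect_set_def closedin_def by auto
  ultimately have "\<exists>A \<subseteq> topspace X. \<forall>(F, P) \<in> T. F ` A \<inter> P \<noteq> {} \<and> P - F ` A \<noteq> {}"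
    by (rule regularCard_meet_and_miss[OF cont_regular infinite_UNIV_char_0])
  then obtain A where A: "A \<subseteq> topspace X"
    and meets_misses: "\<forall>(F, P) \<in> T. F ` A \<inter> P \<noteq> {} \<and> P - F ` A \<noteq> {}"
    by blast
  have "Bernstein_set (Y i) (f i ` A)" if "i \<in> I" for i
  proof (rule Bernstein_setI)
    show "f i ` A \<subseteq> topspace (Y i)" using A onto that by blast
    show "f i ` A \<inter> P \<noteq> {} \<and> P - f i ` A \<noteq> {}" if "perfect_set (Y i) P" "P \<noteq> {}" for P
    proof -
      have "(f i, P) \<in> T" unfolding T_def using \<open>i \<in> I\<close> that by auto
      then show ?thesis using meets_misses by auto
    qed
  qed
  with A show ?thesis by blast
qed

end
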